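(* Let $\mathbf{F}\in\mathbb{K}[x]^{n\times n}$ be nonsingular and column reduced, let $\mathbf{H}$ be its Hermite normal form, let $\vec{s}=[s_1,\dots,s_n]$ with $s_i=\deg h_{ii}$, let $s_{\max}=\max_i s_i$ and $\vec{u}=[s_{\max},\dots,s_{\max}]\in\mathbb{Z}^n$. Suppose $\mathbf{N}\in\mathbb{K}[x]^{2n\times n}$ is a $[-\vec{u},-\vec{s}]$-minimal right kernel basis of $[\mathbf{F},-I]\in\mathbb{K}[x]^{n\times 2n}$, partitioned as $\mathbf{N}=\begin{bmatrix}\mathbf{N}_u\\ \mathbf{N}_d\end{bmatrix}$ with $\mathbf{N}_u,\mathbf{N}_d\in\mathbb{K}[x]^{n\times n}$. Then $\mathbf{N}_u$ is unimodular, and $\mathbf{N}_d$ has row degrees $\vec{s}$ (the $i$-th row of $\mathbf{N}_d$ has degree $s_i$) and is unimodularly equivalent to $\mathbf{H}$, i.e. $\mathbf{N}_d=\mathbf{H}\mathbf{V}$ for some unimodular $\mathbf{V}$.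
   Context: $\mathbb{K}$ is a field. Unimodular: square polynomial matrix with determinant a nonzero constant. Hermite normal form of nonsingular $\mathbf{F}$: the unique $\mathbf{H}=\mathbf{F}\mathbf{U}$, $\mathbf{U}$ unimodular, with $\mathbf{H}=[h_{ij}]$ lower triangular, $h_{ii}$ monic, and $\deg h_{ij}<\deg h_{ii}$ for $j<i$. For a column vector $\mathbf{p}=[p_1,\dots,p_m]^T$ and shift $\vec{t}\in\mathbb{Z}^m$, the $\vec t$-column degree is $\mathrm{cdeg}_{\vec t}\,\mathbf{p}=\max_i(\deg p_i+t_i)$; for a matrix it is the list of shifted degrees of its columns. Writing $x^{\vec t}=\mathrm{diag}(x^{t_1},\dots,x^{t_m})$, a matrix $\mathbf{P}$ with $\vec{c}=\mathrm{cdeg}\,\mathbf{P}$ is column reduced if the matrix whose $(i,j)$ entry is the coefficient of $x^{c_j}$ in $p_{ij}$ has full column rank; $\mathbf{P}$ is $\vec t$-column reduced if $x^{\vec t}\mathbf{P}$ is column reduced. A right kernel basis of $\mathbf{A}\in\mathbb{K}[x]^{m\times k}$ is a full-rank matrix $\mathbf{N}$ with $\mathbf{A}\mathbf{N}=0$ whose columns generate the $\mathbb{K}[x]$-module $\{\mathbf{q}\in\mathbb{K}[x]^k:\mathbf{A}\mathbf{q}=0\}$; it is $\vec t$-minimal if it is moreover $\vec t$-column reduced. *)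

theory Defs
  imports "HOL-Computational_Algebra.Polynomial" "Jordan_Normal_Form.Determinant"
begin

definition unimodular :: "'a::field poly mat \<Rightarrow> bool" where
  "unimodular U \<longleftrightarrow> square_mat U \<and> det U \<noteq> 0 \<and> degree (det U) = 0"

definition nonsingular :: "'a::field poly mat \<Rightarrow> bool" where
  "nonsingular F \<longleftrightarrow> square_mat F \<and> det F \<noteq> 0"

definition is_hermite_form :: "'a::field poly mat \<Rightarrow> bool" where
  "is_hermite_form H \<longleftrightarrow> square_mat H \<and>
     (\<forall>i<dim_row H. \<forall>j<dim_col H. i < j \<longrightarrow> H $$ (i,j) = 0) \<and>
     (\<forall>i<dim_row H. lead_coeff (H $$ (i,i)) = 1) \<and>
     (\<forall>i<dim_row H. \<forall>j<i. H $$ (i,j) = 0 \<or> degree (H $$ (i,j)) < degree (H $$ (i,i)))"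

definition hermite_normal_form_of :: "'a::field poly mat \<Rightarrow> 'a poly mat \<Rightarrow> bool" where
  "hermite_normal_form_of F H \<longleftrightarrow> is_hermite_form H \<and>
     (\<exists>U. unimodular U \<and> dim_row U = dim_col F \<and> H = F * U)"

text \<open>Shifted column degree of column j of P with shift t (over the nonzero entries;
  a zero column has degree -infinity, which never occurs in a column-reduced matrix).\<close>
definition cdeg_shift :: "(nat \<Rightarrow> int) \<Rightarrow> 'a::field poly mat \<Rightarrow> nat \<Rightarrow> int" where
  "cdeg_shift t P j = Max {int (degree (P $$ (i,j))) + t i | i. i < dim_row P \<and> P $$ (i,j) \<noteq> 0}"

text \<open>Leading coefficient matrix of x^t P: entry (i,j) is the coefficient of
  x^(c_j - t_i) in p_ij, where c_j is the t-column degree of column j.\<close>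
definition lcoeff_mat_shift :: "(nat \<Rightarrow> int) \<Rightarrow> 'a::field poly mat \<Rightarrow> 'a mat" where
  "lcoeff_mat_shift t P = mat (dim_row P) (dim_col P) (\<lambda>(i,j).
      if P $$ (i,j) \<noteq> 0 \<and> int (degree (P $$ (i,j))) + t i = cdeg_shift t P j
      then lead_coeff (P $$ (i,j)) else 0)"

definition full_column_rank :: "'a::field mat \<Rightarrow> bool" where
  "full_column_rank L \<longleftrightarrow>
     (\<forall>v \<in> carrier_vec (dim_col L). L *\<^sub>v v = 0\<^sub>v (dim_row L) \<longrightarrow> v = 0\<^sub>v (dim_col L))"

definition column_reduced_shift :: "(nat \<Rightarrow> int) \<Rightarrow> 'a::field poly mat \<Rightarrow> bool" where
  "column_reduced_shift t P \<longleftrightarrow> full_column_rank (lcoeff_mat_shift t P)"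

definition column_reduced :: "'a::field poly mat \<Rightarrow> bool" where
  "column_reduced P \<longleftrightarrow> column_reduced_shift (\<lambda>_. 0) P"

definition right_kernel_basis :: "'a::field poly mat \<Rightarrow> 'a poly mat \<Rightarrow> bool" where
  "right_kernel_basis A N \<longleftrightarrow>
     dim_row N = dim_col A \<and>
     A * N = 0\<^sub>m (dim_row A) (dim_col N) \<and>
     (\<forall>c \<in> carrier_vec (dim_col N). N *\<^sub>v c = 0\<^sub>v (dim_row N) \<longrightarrow> c = 0\<^sub>v (dim_col N)) \<and>
     (\<forall>q \<in> carrier_vec (dim_col A). A *\<^sub>v q = 0\<^sub>v (dim_row A) \<longrightarrow>
        (\<exists>c \<in> carrier_vec (dim_col N). q = N *\<^sub>v c))"

definition minimal_right_kernel_basis ::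
    "(nat \<Rightarrow> int) \<Rightarrow> 'a::field poly mat \<Rightarrow> 'a poly mat \<Rightarrow> bool" where
  "minimal_right_kernel_basis t A N \<longleftrightarrow> right_kernel_basis A N \<and> column_reduced_shift t N"

definition row_degree_is :: "'a::field poly mat \<Rightarrow> nat \<Rightarrow> nat \<Rightarrow> bool" where
  "row_degree_is A i d \<longleftrightarrow> (\<exists>j < dim_col A. A $$ (i,j) \<noteq> 0) \<and>
     Max {degree (A $$ (i,j)) | j. j < dim_col A \<and> A $$ (i,j) \<noteq> 0} = d"

end

theory Submission
  imports Defs
begin

text \<open>The kernel of \<open>[F, -I]\<close> consists of the vectors \<open>[v; F v]\<close>, so \<open>N\<^sub>d = F N\<^sub>u\<close> and
  every \<open>[X; F X]\<close> is \<open>N C\<close> for some \<open>C\<close>. With \<open>X = I\<close> this makes \<open>N\<^sub>u\<close> unimodular, and with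
  \<open>H = F U\<close> it gives \<open>N\<^sub>d = H V\<close> for \<open>V = U\<^sup>-\<^sup>1 N\<^sub>u\<close>.

  For the row degrees, \<open>[U; H]\<close> has \<open>[-u, -s]\<close>-column degrees at most 0: row \<open>i\<close> of \<open>H\<close> has
  degree \<open>s\<^sub>i\<close>, and the entries of \<open>U = F\<^sup>-\<^sup>1 H\<close> have degree at most \<open>s\<^sub>m\<^sub>a\<^sub>x\<close> by the predictable
  degree property of the column reduced \<open>F\<close>. Writing \<open>[U; H] = N C\<close> with \<open>C\<close> nonsingular, the
  predictable degree property of the \<open>[-u, -s]\<close>-reduced \<open>N\<close> bounds its shifted column degrees
  by 0 as well, so row \<open>i\<close> of \<open>N\<^sub>d\<close> has degree at most \<open>s\<^sub>i\<close>. Since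
  \<open>deg det N\<^sub>d = deg det H = \<Sum> s\<^sub>i\<close>, every one of these bounds is attained.\<close>

section \<open>The predictable degree property\<close>

lemma finite_shifted_degrees:
  "finite {int (degree (P $$ (i,j))) + t i | i. i < dim_row P \<and> P $$ (i,j) \<noteq> 0}"
  by (rule finite_subset[of _ "(\<lambda>i. int (degree (P $$ (i,j))) + t i) ` {..<dim_row P}"]) auto

lemma degree_add_shift_le_cdeg_shift:
  assumes "i < dim_row P" "P $$ (i,j) \<noteq> 0"
  shows "int (degree (P $$ (i,j))) + t i \<le> cdeg_shift t P j"
  unfolding cdeg_shift_def by (rule Max_ge[OF finite_shifted_degrees]) (use assms in auto)

lemma mult_mat_vec_unit_vec:
  fixes A :: "'a::semiring_1 mat"
  assumes "A \<in> carrier_mat m n" "j < n"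
  shows "A *\<^sub>v unit_vec n j = col A j"
  using col_mult2[OF assms(1) one_carrier_mat assms(2)] right_mult_one_mat[OF assms(1)] assms(2) by simp

lemma column_reduced_shift_col_nonzero:
  assumes cr: "column_reduced_shift t P" and j: "j < dim_col P"
  shows "\<exists>i<dim_row P. P $$ (i,j) \<noteq> 0"
proof (rule ccontr)
  assume zero: "\<not> ?thesis"
  let ?L = "lcoeff_mat_shift t P"
  have "?L *\<^sub>v unit_vec (dim_col P) j = col ?L j"
    using j by (intro mult_mat_vec_unit_vec) (auto simp: lcoeff_mat_shift_def)
  also have "\<dots> = 0\<^sub>v (dim_row ?L)"
    using zero j by (intro eq_vecI) (auto simp: lcoeff_mat_shift_def)
  finally have "unit_vec (dim_col P) j = (0\<^sub>v (dim_col P) :: 'a vec)"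
    using cr unfolding column_reduced_shift_def full_column_rank_def
    by (auto simp: lcoeff_mat_shift_def)
  then show False
    using j by (metis index_unit_vec(1) index_zero_vec(1) zero_neq_one)
qed

definition lcoeff_vec_shift :: "(nat \<Rightarrow> int) \<Rightarrow> int \<Rightarrow> 'a::zero poly vec \<Rightarrow> 'a vec" where
  "lcoeff_vec_shift d D w = vec (dim_vec w) (\<lambda>l.
      if w $ l \<noteq> 0 \<and> d l + int (degree (w $ l)) = D then lead_coeff (w $ l) else 0)"

lemma coeff_mult_at_degree_bound:
  fixes p q :: "'a::idom poly" and a b D :: int
  assumes p: "p \<noteq> 0 \<Longrightarrow> int (degree p) + a \<le> b"
    and q: "q \<noteq> 0 \<Longrightarrow> b + int (degree q) \<le> D"
  shows "(if p \<noteq> 0 \<and> int (degree p) + a = b then lead_coeff p else 0)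
       * (if q \<noteq> 0 \<and> b + int (degree q) = D then lead_coeff q else 0)
       = (if a \<le> D then coeff (p * q) (nat (D - a)) else 0)"
proof (cases "p = 0 \<or> q = 0")
  case False
  then have pq: "p \<noteq> 0" "q \<noteq> 0" by auto
  show ?thesis
  proof (cases "int (degree p) + int (degree q) + a = D")
    case True
    then have "nat (D - a) = degree p + degree q" by linarith
    then show ?thesis
      using True p q pq by (simp add: coeff_mult_degree_sum)
  next
    case False
    then have "degree (p * q) < nat (D - a)" if "a \<le> D"
      using p q pq that degree_mult_le[of p q] by linarith
    then show ?thesis
      using False p q pq by (auto simp: coeff_eq_0)
  qed
qed auto

lemma lcoeff_mat_shift_mult_lcoeff_vec_shift:
  fixes P :: "'a::field poly mat"
  assumes w: "w \<in> carrier_vec (dim_col P)" and i: "i < dim_row P"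
    and D: "\<And>l. l < dim_col P \<Longrightarrow> w $ l \<noteq> 0 \<Longrightarrow> cdeg_shift t P l + int (degree (w $ l)) \<le> D"
  shows "(lcoeff_mat_shift t P *\<^sub>v lcoeff_vec_shift (cdeg_shift t P) D w) $ i
       = (if t i \<le> D then coeff ((P *\<^sub>v w) $ i) (nat (D - t i)) else 0)"
proof -
  have "(lcoeff_mat_shift t P *\<^sub>v lcoeff_vec_shift (cdeg_shift t P) D w) $ i
      = (\<Sum>l<dim_col P. (if t i \<le> D then coeff (P $$ (i,l) * w $ l) (nat (D - t i)) else 0))"
    using w i degree_add_shift_le_cdeg_shift[OF i] D
    by (auto simp: lcoeff_mat_shift_def lcoeff_vec_shift_def scalar_prod_def atLeast0LessThan
        intro!: sum.cong coeff_mult_at_degree_bound)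
  also have "\<dots> = (if t i \<le> D then coeff ((P *\<^sub>v w) $ i) (nat (D - t i)) else 0)"
    using w i by (simp add: scalar_prod_def coeff_sum atLeast0LessThan)
  finally show ?thesis .
qed

lemma predictable_degree_shift:
  fixes P :: "'a::field poly mat"
  assumes cr: "column_reduced_shift t P" and w: "w \<in> carrier_vec (dim_col P)"
    and k: "k < dim_col P" and wk: "w $ k \<noteq> 0"
  shows "\<exists>i<dim_row P. (P *\<^sub>v w) $ i \<noteq> 0 \<and>
     cdeg_shift t P k + int (degree (w $ k)) \<le> int (degree ((P *\<^sub>v w) $ i)) + t i"
proof (rule ccontr)
  assume low: "\<not> ?thesis"
  let ?d = "cdeg_shift t P"
  define S where "S = {l. l < dim_col P \<and> w $ l \<noteq> 0}"
  define D where "D = Max ((\<lambda>l. ?d l + int (degree (w $ l))) ` S)"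
  let ?v = "lcoeff_vec_shift ?d D w"
  have S: "finite S" "k \<in> S" unfolding S_def using k wk by auto
  have D_ge: "?d l + int (degree (w $ l)) \<le> D" if "l < dim_col P" "w $ l \<noteq> 0" for l
    unfolding D_def using S that by (intro Max_ge) (auto simp: S_def)
  obtain l0 where l0: "l0 \<in> S" "?d l0 + int (degree (w $ l0)) = D"
  proof -
    have "D \<in> (\<lambda>l. ?d l + int (degree (w $ l))) ` S"
      unfolding D_def using S by (intro Max_in) auto
    then show ?thesis using that by blast
  qed
  txt \<open>Every entry of \<open>x\<^sup>t P w\<close> has degree below \<open>D\<close>, so its coefficient of \<open>x\<^sup>D\<close>, which is the
    leading coefficient matrix applied to the leading vector of \<open>w\<close>, vanishes.\<close>
  have "coeff ((P *\<^sub>v w) $ i) (nat (D - t i)) = 0" if "i < dim_row P" "t i \<le> D" for i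
  proof (cases "(P *\<^sub>v w) $ i = 0")
    case False
    then have "int (degree ((P *\<^sub>v w) $ i)) + t i < D"
      using low that D_ge[OF k wk] by fastforce
    then show ?thesis by (intro coeff_eq_0) linarith
  qed simp
  then have "lcoeff_mat_shift t P *\<^sub>v ?v = 0\<^sub>v (dim_row (lcoeff_mat_shift t P))"
    using lcoeff_mat_shift_mult_lcoeff_vec_shift[OF w _ D_ge]
    by (intro eq_vecI) (auto simp: lcoeff_mat_shift_def)
  then have "?v = 0\<^sub>v (dim_col P)"
    using cr w unfolding column_reduced_shift_def full_column_rank_def
    by (auto simp: lcoeff_mat_shift_def lcoeff_vec_shift_def)
  then show False
    using l0 w by (auto simp: S_def lcoeff_vec_shift_def dest: arg_cong[of _ _ "\<lambda>v. v $ l0"])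
qed

section \<open>Determinants and unimodular polynomial matrices\<close>

lemma det_eq_0_if_zero_row:
  assumes A: "A \<in> carrier_mat n n" and k: "k < n" and zero: "\<And>j. j < n \<Longrightarrow> A $$ (k,j) = 0"
  shows "det A = 0"
proof -
  have "(\<Prod>i = 0..<n. A $$ (i, p i)) = 0" if "p permutes {0..<n}" for p
    using k zero permutes_in_image[OF that, of k] by (intro prod_zero bexI[of _ k]) auto
  then show ?thesis by (simp add: det_def'[OF A])
qed

lemma degree_det_le_sum_row_bounds:
  fixes A :: "'a::field poly mat"
  assumes A: "A \<in> carrier_mat n n"
    and r: "\<And>i j. i < n \<Longrightarrow> j < n \<Longrightarrow> degree (A $$ (i,j)) \<le> r i"
  shows "degree (det A) \<le> (\<Sum>i<n. r i)"
proof -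
  have "degree (signof p * (\<Prod>i = 0..<n. A $$ (i, p i))) \<le> (\<Sum>i<n. r i)"
    if p: "p permutes {0..<n}" for p
  proof -
    have "degree (signof p * (\<Prod>i = 0..<n. A $$ (i, p i))) \<le> degree (\<Prod>i = 0..<n. A $$ (i, p i))"
      by (simp add: sign_def)
    also have "\<dots> \<le> (\<Sum>i = 0..<n. degree (A $$ (i, p i)))"
      using degree_prod_sum_le[of "{0..<n}" "\<lambda>i. A $$ (i, p i)"] by (simp add: o_def)
    also have "\<dots> \<le> (\<Sum>i<n. r i)"
      unfolding atLeast0LessThan using r permutes_in_image[OF p] by (intro sum_mono) auto
    finally show ?thesis .
  qed
  then show ?thesis
    unfolding det_def'[OF A] by (intro degree_sum_le) (auto simp: finite_permutations)
qed

lemma column_reduced_degree_le_of_mult: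
  fixes F U :: "'a::field poly mat"
  assumes cr: "column_reduced F" and F: "F \<in> carrier_mat m n" and U: "U \<in> carrier_mat n k"
    and b: "\<And>i j. i < m \<Longrightarrow> j < k \<Longrightarrow> degree ((F * U) $$ (i,j)) \<le> b"
    and i: "i < n" and j: "j < k"
  shows "degree (U $$ (i,j)) \<le> b"
proof (cases "U $$ (i,j) = 0")
  case False
  have cr0: "column_reduced_shift (\<lambda>_. 0) F" using cr unfolding column_reduced_def .
  obtain i' where "i' < m" and
    le: "cdeg_shift (\<lambda>_. 0) F i + int (degree (U $$ (i,j))) \<le> int (degree ((F *\<^sub>v col U j) $ i'))"
    using predictable_degree_shift[OF cr0, of "col U j" i] False F U i j by auto
  moreover obtain i'' where "i'' < m" "F $$ (i'',i) \<noteq> 0"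
    using column_reduced_shift_col_nonzero[OF cr0] F i by auto
  then have "0 \<le> cdeg_shift (\<lambda>_. 0) F i"
    using degree_add_shift_le_cdeg_shift[of i'' F i "\<lambda>_. 0"] F by simp
  ultimately show ?thesis
    using b[of i' j] col_mult2[OF F U j] F U j by simp
qed simp

lemma cdeg_shift_le_of_mult:
  fixes N C :: "'a::field poly mat"
  assumes cr: "column_reduced_shift t N" and N: "N \<in> carrier_mat m n"
    and C: "C \<in> carrier_mat n n" "det C \<noteq> 0"
    and b: "\<And>i j. i < m \<Longrightarrow> j < n \<Longrightarrow> (N * C) $$ (i,j) \<noteq> 0 \<Longrightarrow>
              int (degree ((N * C) $$ (i,j))) + t i \<le> b"
    and k: "k < n"
  shows "cdeg_shift t N k \<le> b"
proof -
  obtain j where j: "j < n" and Ckj: "C $$ (k,j) \<noteq> 0"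
    using det_eq_0_if_zero_row[OF C(1) k] C(2) by blast
  obtain i where "i < m" "(N *\<^sub>v col C j) $ i \<noteq> 0"
    "cdeg_shift t N k + int (degree (C $$ (k,j))) \<le> int (degree ((N *\<^sub>v col C j) $ i)) + t i"
    using predictable_degree_shift[OF cr, of "col C j" k] N C j Ckj k by auto
  then show ?thesis
    using b[of i j] col_mult2[OF N C(1) j] N C j by fastforce
qed

lemma unimodular_one_mat: "unimodular (1\<^sub>m n :: 'a::field poly mat)"
  by (simp add: unimodular_def)

lemma unimodular_mult_factors:
  fixes A B :: "'a::field poly mat"
  assumes A: "A \<in> carrier_mat n n" and B: "B \<in> carrier_mat n n" and AB: "unimodular (A * B)"
  shows "unimodular A" "unimodular B"
proof -
  have "det A * det B \<noteq> 0" "degree (det A * det B) = 0"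
    using AB det_mult[OF A B] unfolding unimodular_def by auto
  then show "unimodular A" "unimodular B"
    using A B degree_mult_eq[of "det A" "det B"] unfolding unimodular_def by auto
qed

lemma unimodular_right_inverse:
  fixes U :: "'a::field poly mat"
  assumes U: "U \<in> carrier_mat n n" and uni: "unimodular U"
  obtains W where "W \<in> carrier_mat n n" "U * W = 1\<^sub>m n"
proof -
  obtain a where a: "det U = [:a:]" "a \<noteq> 0"
    using uni unfolding unimodular_def by (metis degree_0_id pCons_eq_0_iff)
  let ?W = "[:inverse a:] \<cdot>\<^sub>m adj_mat U"
  have "U * ?W = [:inverse a:] \<cdot>\<^sub>m (det U \<cdot>\<^sub>m 1\<^sub>m n)"
    using U adj_mat[OF U] by (simp add: mult_smult_distrib)
  also have "\<dots> = 1\<^sub>m n"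
    using a by (intro eq_matI) auto
  finally show ?thesis
    using that adj_mat(1)[OF U] smult_carrier_mat by blast
qed

lemma row_degree_is_if_degree_det:
  fixes A :: "'a::field poly mat"
  assumes A: "A \<in> carrier_mat n n" and det: "det A \<noteq> 0" "degree (det A) = (\<Sum>i<n. s i)"
    and s: "\<And>i j. i < n \<Longrightarrow> j < n \<Longrightarrow> degree (A $$ (i,j)) \<le> s i"
    and i: "i < n"
  shows "row_degree_is A i (s i)"
proof -
  let ?M = "{degree (A $$ (i,j)) | j. j < dim_col A \<and> A $$ (i,j) \<noteq> 0}"
  have nonzero: "\<exists>j < dim_col A. A $$ (i,j) \<noteq> 0"
    using det_eq_0_if_zero_row[OF A i] det A by auto
  have M: "finite ?M" "?M \<noteq> {}"
    using nonzero by (auto intro: finite_subset[of _ "(\<lambda>j. degree (A $$ (i,j))) ` {..<dim_col A}"])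
  have "Max ?M \<le> s i"
    using M s i A by (subst Max_le_iff) auto
  moreover have "\<not> Max ?M < s i"
  proof
    assume lt: "Max ?M < s i"
    let ?r = "s(i := Max ?M)"
    have "degree (A $$ (l,j)) \<le> ?r l" if "l < n" "j < n" for l j
      using s[OF that] M A that by (cases "A $$ (l,j) = 0") (auto intro: Max_ge)
    then have "degree (det A) \<le> (\<Sum>l<n. ?r l)"
      by (rule degree_det_le_sum_row_bounds[OF A])
    also have "\<dots> < (\<Sum>l<n. s l)"
      using lt i by (intro sum_strict_mono_ex1) auto
    finally show False using det by simp
  qed
  ultimately have "Max ?M = s i" by linarith
  then show ?thesis
    using nonzero unfolding row_degree_is_def by simp
qed

lemma hermite_form_degree_le_diag:
  assumes H: "is_hermite_form H" "H \<in> carrier_mat n n" and ij: "i < n" "j < n"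
  shows "degree (H $$ (i,j)) \<le> degree (H $$ (i,i))"
  using H ij unfolding is_hermite_form_def
  by (cases i j rule: linorder_cases) fastforce+

lemma det_hermite_form:
  fixes H :: "'a::field poly mat"
  assumes H: "is_hermite_form H" "H \<in> carrier_mat n n"
  shows "det H \<noteq> 0" "degree (det H) = (\<Sum>i<n. degree (H $$ (i,i)))"
proof -
  have diag: "H $$ (i,i) \<noteq> 0" if "i < n" for i
    using H that unfolding is_hermite_form_def by fastforce
  have "det H = (\<Prod>i<n. H $$ (i,i))"
    using H det_lower_triangular[of n H] unfolding is_hermite_form_def
    by (simp add: prod_list_diag_prod atLeast0LessThan)
  then show "det H \<noteq> 0" "degree (det H) = (\<Sum>i<n. degree (H $$ (i,i)))"
    using diag by (simp_all add: degree_prod_eq_sum_degree)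
qed

section \<open>Kernel bases of \<open>[F, -I]\<close>\<close>

definition upper_block :: "'a mat \<Rightarrow> nat \<Rightarrow> 'a mat" where
  "upper_block N n = mat n (dim_col N) (\<lambda>(i,j). N $$ (i,j))"

definition lower_block :: "'a mat \<Rightarrow> nat \<Rightarrow> 'a mat" where
  "lower_block N n = mat n (dim_col N) (\<lambda>(i,j). N $$ (i + n, j))"

definition append_neg_id :: "'a::ring_1 mat \<Rightarrow> nat \<Rightarrow> 'a mat" where
  "append_neg_id F n = mat n (2 * n) (\<lambda>(i,j). if j < n then F $$ (i,j) else - (1\<^sub>m n) $$ (i, j - n))"

lemma upper_block_mult:
  assumes "n \<le> dim_row N" "C \<in> carrier_mat (dim_col N) k"
  shows "upper_block N n * C = upper_block (N * C) n"
  using assms by (intro eq_matI) (auto simp: upper_block_def scalar_prod_def)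

lemma lower_block_mult:
  assumes "2 * n \<le> dim_row N" "C \<in> carrier_mat (dim_col N) k"
  shows "lower_block N n * C = lower_block (N * C) n"
  using assms by (intro eq_matI) (auto simp: lower_block_def scalar_prod_def)

lemma index_append_rows:
  assumes "X \<in> carrier_mat n k" "Y \<in> carrier_mat m k" "l < n + m" "j < k"
  shows "(X @\<^sub>r Y) $$ (l,j) = (if l < n then X $$ (l,j) else Y $$ (l - n, j))"
  using assms by (simp add: append_rows_def)

lemma upper_block_append_rows:
  assumes "X \<in> carrier_mat n k" "Y \<in> carrier_mat m k"
  shows "upper_block (X @\<^sub>r Y) n = X"
  using assms by (intro eq_matI) (auto simp: upper_block_def append_rows_def)

lemma lower_block_append_rows:
  assumes "X \<in> carrier_mat n k" "Y \<in> carrier_mat n k"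
  shows "lower_block (X @\<^sub>r Y) n = Y"
  using assms by (intro eq_matI) (auto simp: lower_block_def append_rows_def)

lemma append_neg_id_mult:
  fixes F M :: "'a::comm_ring_1 mat"
  assumes F: "F \<in> carrier_mat n n" and M: "M \<in> carrier_mat (2 * n) k"
  shows "append_neg_id F n * M = F * upper_block M n - lower_block M n"
proof (rule eq_matI)
  fix i j assume "i < dim_row (F * upper_block M n - lower_block M n)"
    "j < dim_col (F * upper_block M n - lower_block M n)"
  then have i: "i < n" and j: "j < k" using F M by (auto simp: lower_block_def)
  let ?f = "\<lambda>l. append_neg_id F n $$ (i,l) * M $$ (l,j)"
  have "(append_neg_id F n * M) $$ (i,j) = (\<Sum>l<n. ?f l) + (\<Sum>l<n. ?f (l + n))"
    using F M i j sum.atLeastLessThan_concat[of 0 n "2 * n" ?f] sum.shift_bounds_nat_ivl[of ?f 0 n n]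
    by (simp add: append_neg_id_def scalar_prod_def atLeast0LessThan mult_2)
  also have "\<dots> = (F * upper_block M n) $$ (i,j) - lower_block M n $$ (i,j)"
    using F M i j by (simp add: append_neg_id_def upper_block_def lower_block_def scalar_prod_def
        atLeast0LessThan sum_negf if_distrib[of "\<lambda>x. x * _"] cong: if_cong)
  finally show "(append_neg_id F n * M) $$ (i,j) = (F * upper_block M n - lower_block M n) $$ (i,j)"
    using F M i j by (simp add: upper_block_def lower_block_def)
qed (use F M in \<open>auto simp: append_neg_id_def lower_block_def\<close>)

lemma right_kernel_basis_factor:
  assumes kb: "right_kernel_basis A N" and M: "M \<in> carrier_mat (dim_col A) k"
    and AM: "A * M = 0\<^sub>m (dim_row A) k"
  obtains C where "C \<in> carrier_mat (dim_col N) k" "M = N * C"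
proof -
  have "\<exists>c \<in> carrier_vec (dim_col N). col M j = N *\<^sub>v c" if j: "j < k" for j
  proof -
    have "A *\<^sub>v col M j = col (A * M) j"
      using col_mult2[OF carrier_matI M j] by simp
    then have "A *\<^sub>v col M j = 0\<^sub>v (dim_row A)"
      using AM j by simp
    moreover have "col M j \<in> carrier_vec (dim_col A)"
      using M by (simp add: carrier_vecI)
    ultimately show ?thesis
      using kb unfolding right_kernel_basis_def by blast
  qed
  then obtain c where c: "\<And>j. j < k \<Longrightarrow> c j \<in> carrier_vec (dim_col N) \<and> col M j = N *\<^sub>v c j"
    by metis
  let ?C = "mat (dim_col N) k (\<lambda>(i,j). c j $ i)"
  have "col ?C j = c j" if "j < k" for j
    using c[OF that] that by (intro eq_vecI) auto
  moreover have "M $$ (i,j) = (N *\<^sub>v c j) $ i" if "i < dim_row M" "j < k" for i j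
    using c[OF that(2)] M that by (metis index_col carrier_matD(2))
  ultimately have "M = N * ?C"
    using M kb unfolding right_kernel_basis_def by (intro eq_matI) auto
  then show ?thesis
    using that[of ?C] by simp
qed

lemma lower_block_eq_if_append_neg_id_mult_eq_0:
  fixes F N :: "'a::comm_ring_1 mat"
  assumes F: "F \<in> carrier_mat n n" and N: "N \<in> carrier_mat (2 * n) m"
    and zero: "append_neg_id F n * N = 0\<^sub>m n m"
  shows "lower_block N n = F * upper_block N n"
proof -
  have diff: "F * upper_block N n - lower_block N n = 0\<^sub>m n m"
    using zero append_neg_id_mult[OF F N] by simp
  show ?thesis
  proof (rule eq_matI)
    fix i j assume "i < dim_row (F * upper_block N n)" "j < dim_col (F * upper_block N n)"
    then have "(F * upper_block N n - lower_block N n) $$ (i,j) = 0"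
      using diff F N by (simp add: upper_block_def)
    then show "lower_block N n $$ (i,j) = (F * upper_block N n) $$ (i,j)"
      using \<open>i < _\<close> \<open>j < _\<close> F N by (simp add: upper_block_def lower_block_def)
  qed (use F N in \<open>auto simp: upper_block_def lower_block_def\<close>)
qed

lemma right_kernel_basis_append_neg_id_factor:
  fixes F N X :: "'a::field poly mat"
  assumes F: "F \<in> carrier_mat n n" and kb: "right_kernel_basis (append_neg_id F n) N"
    and N: "N \<in> carrier_mat (2 * n) m" and X: "X \<in> carrier_mat n k"
  obtains C where "C \<in> carrier_mat m k" "N * C = X @\<^sub>r (F * X)"
proof -
  let ?M = "X @\<^sub>r (F * X)"
  have M: "?M \<in> carrier_mat (2 * n) k"
    using F X by (simp add: mult_2)
  have "append_neg_id F n * ?M = 0\<^sub>m n k"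
    using append_neg_id_mult[OF F M] F X upper_block_append_rows[OF X, of "F * X" n]
    by (simp add: lower_block_append_rows)
  moreover have "dim_col (append_neg_id F n) = 2 * n" "dim_row (append_neg_id F n) = n"
    by (simp_all add: append_neg_id_def)
  ultimately obtain C where "C \<in> carrier_mat (dim_col N) k" "?M = N * C"
    using right_kernel_basis_factor[OF kb, of ?M k] M by auto
  then show ?thesis
    using that N by simp
qed

lemma unimodular_upper_block:
  fixes F N :: "'a::field poly mat"
  assumes F: "F \<in> carrier_mat n n" and kb: "right_kernel_basis (append_neg_id F n) N"
    and N: "N \<in> carrier_mat (2 * n) n"
  shows "unimodular (upper_block N n)"
proof -
  obtain C where C: "C \<in> carrier_mat n n" "N * C = 1\<^sub>m n @\<^sub>r F"
    using right_kernel_basis_append_neg_id_factor[OF F kb N one_carrier_mat] F by auto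
  then have "upper_block N n * C = 1\<^sub>m n"
    using upper_block_mult[of n N C n] upper_block_append_rows[OF one_carrier_mat F] N by simp
  moreover have "upper_block N n \<in> carrier_mat n n"
    using N by (simp add: upper_block_def)
  ultimately show ?thesis
    using unimodular_mult_factors(1) unimodular_one_mat C(1) by metis
qed

lemma lower_block_eq_mult_unimodular:
  fixes F H U N :: "'a::field poly mat"
  assumes F: "F \<in> carrier_mat n n" and U: "U \<in> carrier_mat n n" "unimodular U" and H: "H = F * U"
    and kb: "right_kernel_basis (append_neg_id F n) N" and N: "N \<in> carrier_mat (2 * n) n"
  obtains V where "V \<in> carrier_mat n n" "unimodular V" "lower_block N n = H * V"
proof -
  have Nu: "upper_block N n \<in> carrier_mat n n"
    using N by (simp add: upper_block_def)
  obtain W where W: "W \<in> carrier_mat n n" "U * W = 1\<^sub>m n"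
    using unimodular_right_inverse[OF U] by blast
  define V where "V = W * upper_block N n"
  have V: "V \<in> carrier_mat n n"
    unfolding V_def using W Nu by simp
  have UV: "U * V = upper_block N n"
    unfolding V_def using W Nu U by (simp flip: assoc_mult_mat)
  have "lower_block N n = F * upper_block N n"
    using lower_block_eq_if_append_neg_id_mult_eq_0[OF F N] kb N unfolding right_kernel_basis_def
    by (simp add: append_neg_id_def)
  also have "\<dots> = H * V"
    unfolding H UV[symmetric] using F U V by (simp add: assoc_mult_mat)
  finally show ?thesis
    using that V unimodular_mult_factors(2)[OF U(1) V] UV unimodular_upper_block[OF F kb N] by simp
qed

lemma hermite_form_degree_le_max_diag:
  assumes "is_hermite_form H" "H \<in> carrier_mat n n" "i < n" "j < n"
  shows "degree (H $$ (i,j)) \<le> Max {degree (H $$ (k,k)) | k. k < n}"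
proof -
  have "degree (H $$ (i,i)) \<le> Max {degree (H $$ (k,k)) | k. k < n}"
    using assms(3) by (intro Max_ge) auto
  then show ?thesis
    using hermite_form_degree_le_diag[OF assms] by linarith
qed

lemma hermite_transform_degree_le_max_diag:
  fixes F U H :: "'a::field poly mat"
  assumes F: "F \<in> carrier_mat n n" "column_reduced F" and U: "U \<in> carrier_mat n n"
    and H: "H = F * U" "is_hermite_form H" and ij: "i < n" "j < n"
  shows "degree (U $$ (i,j)) \<le> Max {degree (H $$ (k,k)) | k. k < n}"
proof (rule column_reduced_degree_le_of_mult[OF F(2,1) U _ ij])
  have "H \<in> carrier_mat n n" using F U H(1) by simp
  then show "degree ((F * U) $$ (i,j)) \<le> Max {degree (H $$ (k,k)) | k. k < n}"
    if "i < n" "j < n" for i j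
    using hermite_form_degree_le_max_diag[OF H(2) _ that] H(1) by simp
qed

definition hermite_kernel_shift :: "'a::zero poly mat \<Rightarrow> nat \<Rightarrow> nat \<Rightarrow> int" where
  "hermite_kernel_shift H n i = (if i < n then - int (Max {degree (H $$ (k,k)) | k. k < n})
                                 else - int (degree (H $$ (i - n, i - n))))"

lemma lower_block_degree_le:
  fixes F H U N :: "'a::field poly mat"
  assumes F: "F \<in> carrier_mat n n" "column_reduced F" and U: "U \<in> carrier_mat n n" "unimodular U"
    and H: "H = F * U" "is_hermite_form H" and N: "N \<in> carrier_mat (2 * n) n"
    and mkb: "minimal_right_kernel_basis (hermite_kernel_shift H n) (append_neg_id F n) N"
    and i: "i < n" and k: "k < n"
  shows "degree (lower_block N n $$ (i,k)) \<le> degree (H $$ (i,i))"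
proof -
  let ?t = "hermite_kernel_shift H n"
  have kb: "right_kernel_basis (append_neg_id F n) N" and cr: "column_reduced_shift ?t N"
    using mkb unfolding minimal_right_kernel_basis_def by auto
  have Hc: "H \<in> carrier_mat n n" using H F U by simp
  obtain C where C: "C \<in> carrier_mat n n" "N * C = U @\<^sub>r H"
    using right_kernel_basis_append_neg_id_factor[OF F(1) kb N U(1)] H(1) by auto
  then have "upper_block N n * C = U"
    using upper_block_mult[of n N C n] upper_block_append_rows[OF U(1) Hc] N by simp
  then have "det (upper_block N n) * det C = det U"
    using det_mult[OF _ C(1), of "upper_block N n"] N by (simp add: upper_block_def)
  then have detC: "det C \<noteq> 0"
    using U(2) unfolding unimodular_def by auto
  have "cdeg_shift ?t N k \<le> 0"
  proof (rule cdeg_shift_le_of_mult[OF cr N C(1) detC _ k])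
    fix l j assume l: "l < 2 * n" and j: "j < n" and "(N * C) $$ (l,j) \<noteq> 0"
    show "int (degree ((N * C) $$ (l,j))) + ?t l \<le> 0"
    proof (cases "l < n")
      case True
      then have "(N * C) $$ (l,j) = U $$ (l,j)"
        using C(2) index_append_rows[OF U(1) Hc, of l j] j by simp
      then show ?thesis
        using hermite_transform_degree_le_max_diag[OF F U(1) H True j] True
        by (simp add: hermite_kernel_shift_def)
    next
      case False
      then have "(N * C) $$ (l,j) = H $$ (l - n, j)"
        using C(2) index_append_rows[OF U(1) Hc, of l j] l j by simp
      then show ?thesis
        using hermite_form_degree_le_diag[OF H(2) Hc, of "l - n" j] False l j
        by (simp add: hermite_kernel_shift_def)
    qed
  qed
  moreover have "?t (i + n) = - int (degree (H $$ (i,i)))"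
    by (simp add: hermite_kernel_shift_def)
  ultimately show ?thesis
    using degree_add_shift_le_cdeg_shift[of "i + n" N k ?t] N i k
    by (cases "N $$ (i + n, k) = 0") (simp_all add: lower_block_def)
qed

theorem mainTheorem2:
  fixes F H N :: "'a::field poly mat" and n :: nat
  assumes "F \<in> carrier_mat n n"
    and "nonsingular F"
    and "column_reduced F"
    and "hermite_normal_form_of F H"
    and "N \<in> carrier_mat (2 * n) n"
    and "minimal_right_kernel_basis
           (\<lambda>i. if i < n then - int (Max {degree (H $$ (k,k)) | k. k < n})
                 else - int (degree (H $$ (i - n, i - n))))
           (mat n (2 * n) (\<lambda>(i,j). if j < n then F $$ (i,j) else - (1\<^sub>m n) $$ (i, j - n)))
           N"
  shows "unimodular (mat n n (\<lambda>(i,j). N $$ (i,j)))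
    \<and> (\<forall>i<n. row_degree_is (mat n n (\<lambda>(i,j). N $$ (i + n, j))) i (degree (H $$ (i,i))))
    \<and> (\<exists>V. unimodular V \<and> V \<in> carrier_mat n n \<and>
           mat n n (\<lambda>(i,j). N $$ (i + n, j)) = H * V)"
proof -
  note F = assms(1) and N = assms(5)
  have blocks: "mat n n (\<lambda>(i,j). N $$ (i,j)) = upper_block N n"
    "mat n n (\<lambda>(i,j). N $$ (i + n, j)) = lower_block N n"
    using N by (simp_all add: upper_block_def lower_block_def)
  have mkb: "minimal_right_kernel_basis (hermite_kernel_shift H n) (append_neg_id F n) N"
    using assms(6) unfolding hermite_kernel_shift_def[abs_def] append_neg_id_def .
  then have kb: "right_kernel_basis (append_neg_id F n) N"
    unfolding minimal_right_kernel_basis_def by simp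
  obtain U where U: "U \<in> carrier_mat n n" "unimodular U" and H: "H = F * U" "is_hermite_form H"
    using assms(4) F unfolding hermite_normal_form_of_def unimodular_def by fastforce
  obtain V where V: "V \<in> carrier_mat n n" "unimodular V" "lower_block N n = H * V"
    using lower_block_eq_mult_unimodular[OF F U H(1) kb N] by blast
  have Hc: "H \<in> carrier_mat n n" using F U H by simp
  have "det (lower_block N n) = det H * det V"
    using det_mult[OF Hc V(1)] V(3) by simp
  then have det: "det (lower_block N n) \<noteq> 0"
    "degree (det (lower_block N n)) = (\<Sum>i<n. degree (H $$ (i,i)))"
    using det_hermite_form[OF H(2) Hc] V(2) degree_mult_eq[of "det H" "det V"]
    unfolding unimodular_def by auto
  have "row_degree_is (lower_block N n) i (degree (H $$ (i,i)))" if "i < n" for i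
    using row_degree_is_if_degree_det[OF _ det lower_block_degree_le[OF F assms(3) U H N mkb] that] N
    by (simp add: lower_block_def)
  then show ?thesis
    using blocks unimodular_upper_block[OF F kb N] V by auto
qed

end
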